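(* Let $X$ be a continuous vector field on $\mathbb{S}^1$. Then for any $A\in\mathrm{O}_0(1,2)$ and $v\in\mathbb{R}^{1,2}$, $w(A_*X+\Lambda(v))=w(X)$.
   Context: $\mathbb{R}^{1,2}$ is $\mathbb{R}^3$ with $\langle x,y\rangle=-x_0y_0+x_1y_1+x_2y_2$; $\mathrm{O}_0(1,2)$ is the identity component of its linear isometry group, acting on $\overline{\mathbb{D}^2}$ by $A\cdot\eta=\Pi(A(1,\eta))$, $\Pi(x_0,x_1,x_2)=(x_1/x_0,x_2/x_0)$; $A_*X$ is the pushforward of $X$ by $z\mapsto A\cdot z$ on $\mathbb{S}^1$. $\Lambda(v)$ is the Killing field (extended to $\mathbb{S}^1$) $\eta\mapsto\mathrm{d}_{(1,\eta)}\Pi((1,\eta)\boxtimes v)$, where $\langle x\boxtimes y,u\rangle=\det(x,y,u)$. A vector field $Y$ on $\mathbb{S}^1$ is $Y(z)=iz\phi_Y(z)$. $\phi_Y^-(\eta)=\sup\{a(\eta):a\text{ affine},a|_{\mathbb{S}^1}\le\phi_Y\}$, $\phi_Y^+(\eta)=\inf\{a(\eta):a\text{ affine},a|_{\mathbb{S}^1}\ge\phi_Y\}$. Width: $w(Y)=\sup_{\eta\in\mathbb{D}^2}\frac{\phi_Y^+(\eta)-\phi_Y^-(\eta)}{\sqrt{1-|\eta|^2}}\in[0,+\infty]$. *)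

theory Defs
  imports "HOL-Analysis.Analysis"
begin

text \<open>Minkowski space R^{1,2} is real^3 with coordinates x$1 = x_0, x$2 = x_1, x$3 = x_2.
  Points of the closed disk / circle are complex numbers.\<close>

definition mink :: "real^3 \<Rightarrow> real^3 \<Rightarrow> real" where
  "mink x y = - (x$1 * y$1) + x$2 * y$2 + x$3 * y$3"

definition O12 :: "(real^3^3) set" where
  "O12 = {A. \<forall>x y. mink (A *v x) (A *v y) = mink x y}"

definition O0_12 :: "(real^3^3) set" where
  "O0_12 = {A. connected_component O12 (mat 1) A}"

definition Pi_proj :: "real^3 \<Rightarrow> complex" where
  "Pi_proj x = Complex (x$2 / x$1) (x$3 / x$1)"

definition lift :: "complex \<Rightarrow> real^3" where
  "lift \<eta> = vector [1, Re \<eta>, Im \<eta>]"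

definition act :: "real^3^3 \<Rightarrow> complex \<Rightarrow> complex" where
  "act A \<eta> = Pi_proj (A *v lift \<eta>)"

definition pushfwd :: "real^3^3 \<Rightarrow> (complex \<Rightarrow> complex) \<Rightarrow> complex \<Rightarrow> complex" where
  "pushfwd A X w = (let z = act (matrix_inv A) w in frechet_derivative (act A) (at z) (X z))"

definition mcross :: "real^3 \<Rightarrow> real^3 \<Rightarrow> real^3" where
  "mcross x y = (THE w. \<forall>u. mink w u = det (vector [x, y, u] :: real^3^3))"

definition Killing :: "real^3 \<Rightarrow> complex \<Rightarrow> complex" where
  "Killing v \<eta> = frechet_derivative Pi_proj (at (lift \<eta>)) (mcross (lift \<eta>) v)"

definition vfield_on_circle :: "(complex \<Rightarrow> complex) \<Rightarrow> bool" where
  "vfield_on_circle Y \<longleftrightarrow> (\<forall>z\<in>sphere 0 1. Y z / (\<i> * z) \<in> \<real>)"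

definition phiY :: "(complex \<Rightarrow> complex) \<Rightarrow> complex \<Rightarrow> real" where
  "phiY Y z = Re (Y z / (\<i> * z))"

definition affine_fun :: "(complex \<Rightarrow> real) \<Rightarrow> bool" where
  "affine_fun a \<longleftrightarrow> (\<exists>b c. a = (\<lambda>\<eta>. c + b \<bullet> \<eta>))"

definition phi_minus :: "(complex \<Rightarrow> complex) \<Rightarrow> complex \<Rightarrow> real" where
  "phi_minus Y \<eta> = Sup {a \<eta> | a. affine_fun a \<and> (\<forall>z\<in>sphere 0 1. a z \<le> phiY Y z)}"

definition phi_plus :: "(complex \<Rightarrow> complex) \<Rightarrow> complex \<Rightarrow> real" where
  "phi_plus Y \<eta> = Inf {a \<eta> | a. affine_fun a \<and> (\<forall>z\<in>sphere 0 1. a z \<ge> phiY Y z)}"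

definition width :: "(complex \<Rightarrow> complex) \<Rightarrow> ereal" where
  "width Y = (SUP \<eta>\<in>ball 0 1. ereal ((phi_plus Y \<eta> - phi_minus Y \<eta>) / sqrt (1 - (cmod \<eta>)\<^sup>2)))"

end

theory Submission
  imports Defs
begin

(* Write affine functions on the disk as eta |-> p . (1, eta) and put B = A^-1. The angular
   function of A_*X is w |-> (B (1,w))_0 * phi_X (B.w), and that of Lambda(v) is affine. A weighted
   pullback of this kind turns the affine function of p into the affine function of p B, so the
   affine majorants (minorants) of phi_Y are exactly the transforms of those of phi_X plus the
   Killing part, and phi_Y^+- (eta) = m * phi_X^+- (B.eta) + affine, with m = (B (1,eta))_0.
   Since also 1 - |B.eta|^2 = (1 - |eta|^2) / m^2, the quotient defining the width at eta equals
   the one for X at B.eta, and B permutes the open disk. *)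

section \<open>Minkowski space and the lift of the disk\<close>

lemma vec3_eq_iff: "(x::real^3) = y \<longleftrightarrow> x$1 = y$1 \<and> x$2 = y$2 \<and> x$3 = y$3"
  by (simp add: vec_eq_iff forall_3)

lemma inner_vec3: "(p::real^3) \<bullet> y = p$1 * y$1 + p$2 * y$2 + p$3 * y$3"
  by (simp add: inner_vec_def sum_3)

lemma lift_component [simp]: "lift \<eta> $ 1 = 1" "lift \<eta> $ 2 = Re \<eta>" "lift \<eta> $ 3 = Im \<eta>"
  by (simp_all add: lift_def)

lemma inner_lift: "p \<bullet> lift \<eta> = p$1 + Complex (p$2) (p$3) \<bullet> \<eta>"
  by (simp add: inner_vec3 inner_complex_def)

lemma mink_lift_self: "mink (lift \<eta>) (lift \<eta>) = (cmod \<eta>)\<^sup>2 - 1"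
  unfolding mink_def cmod_power2 by (simp add: power2_eq_square)

lemma mink_scaleR: "mink (c *\<^sub>R x) (d *\<^sub>R y) = c * d * mink x y"
  by (simp add: mink_def algebra_simps)

lemma Pi_proj_lift [simp]: "Pi_proj (lift \<eta>) = \<eta>"
  by (simp add: Pi_proj_def complex_eq_iff)

lemma Pi_proj_scaleR: "c \<noteq> 0 \<Longrightarrow> Pi_proj (c *\<^sub>R y) = Pi_proj y"
  by (simp add: Pi_proj_def)

lemma lift_Pi_proj: "y$1 \<noteq> 0 \<Longrightarrow> y = y$1 *\<^sub>R lift (Pi_proj y)"
  by (simp add: vec3_eq_iff Pi_proj_def)

lemma mink_self_Pi_proj: "y$1 \<noteq> 0 \<Longrightarrow> mink y y = (y$1)\<^sup>2 * ((cmod (Pi_proj y))\<^sup>2 - 1)"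
  by (metis lift_Pi_proj mink_lift_self mink_scaleR power2_eq_square)

lemma causal_time_nonzero: "mink x x \<le> 0 \<Longrightarrow> x \<noteq> 0 \<Longrightarrow> x$1 \<noteq> 0"
  by (auto simp: mink_def vec3_eq_iff sum_squares_le_zero_iff)

section \<open>The Lorentz group\<close>

definition mink_gram :: "real^3^3" where
  "mink_gram = (\<chi> i j. if i = j then (if i = 1 then -1 else 1) else 0)"

lemma mink_gram_entry: "mink_gram $ i $ j = mink (axis i 1) (axis j 1)"
  using exhaust_3[of i] exhaust_3[of j] by (auto simp: mink_gram_def mink_def axis_def)

lemma det_mink_gram: "det mink_gram = -1"
  by (simp add: det_3 mink_gram_def)

lemma O12_gram:
  assumes "A \<in> O12" shows "transpose A ** mink_gram ** A = mink_gram"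
proof -
  have "(transpose A ** mink_gram ** A) $ i $ j = mink (A *v axis i 1) (A *v axis j 1)" for i j
    unfolding matrix_vector_mult_basis mink_def
    by (simp add: matrix_matrix_mult_def transpose_def column_def mink_gram_def sum_3 algebra_simps)
  with assms show ?thesis
    by (simp add: vec_eq_iff O12_def mink_gram_entry)
qed

lemma O12_det_square:
  assumes "A \<in> O12" shows "(det A)\<^sup>2 = 1"
proof -
  have "det (transpose A ** mink_gram ** A) = det mink_gram"
    using O12_gram[OF assms] by simp
  then show ?thesis
    by (simp add: det_mul det_mink_gram power2_eq_square)
qed

lemma O12_invertible: "A \<in> O12 \<Longrightarrow> invertible A"
  using O12_det_square invertible_det_nz by fastforce

lemma matrix_inv_mult:
  fixes A :: "'a::semiring_1^'n^'n"
  assumes "invertible A"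
  shows "A ** matrix_inv A = mat 1" "matrix_inv A ** A = mat 1"
proof -
  have "A ** matrix_inv A = mat 1 \<and> matrix_inv A ** A = mat 1"
    using assms unfolding invertible_def matrix_inv_def by (rule someI_ex)
  then show "A ** matrix_inv A = mat 1" "matrix_inv A ** A = mat 1" by auto
qed

lemma O12_matrix_inv:
  assumes "A \<in> O12" shows "matrix_inv A \<in> O12"
proof -
  have "mink (matrix_inv A *v x) (matrix_inv A *v y)
      = mink (A *v (matrix_inv A *v x)) (A *v (matrix_inv A *v y))" for x y
    using assms by (simp add: O12_def)
  also have "\<dots> x y = mink x y" for x y
    by (simp add: matrix_vector_mul_assoc matrix_inv_mult O12_invertible assms)
  finally show ?thesis
    by (simp add: O12_def)
qed

definition orthochronous :: "real^3^3 \<Rightarrow> bool" where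
  "orthochronous A \<longleftrightarrow> (\<forall>x. mink x x \<le> 0 \<and> x$1 > 0 \<longrightarrow> (A *v x)$1 > 0)"

lemma orthochronous_matrix_inv:
  assumes "A \<in> O12" "orthochronous A"
  shows "orthochronous (matrix_inv A)"
  unfolding orthochronous_def
proof (intro allI impI)
  fix x :: "real^3"
  assume x: "mink x x \<le> 0 \<and> x$1 > 0"
  let ?y = "matrix_inv A *v x"
  have "A ** matrix_inv A = mat 1"
    using matrix_inv_mult O12_invertible assms(1) by blast
  then have Ay: "A *v ?y = x"
    by (simp add: matrix_vector_mul_assoc)
  then have "?y \<noteq> 0"
    using x by auto
  moreover have causal: "mink ?y ?y \<le> 0"
    using O12_matrix_inv[OF assms(1)] x by (simp add: O12_def)
  ultimately have "?y$1 \<noteq> 0"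
    using causal_time_nonzero by blast
  moreover have "\<not> ?y$1 < 0"
  proof
    assume "?y$1 < 0"
    moreover have "mink (- ?y) (- ?y) \<le> 0"
      using causal by (simp add: mink_def)
    ultimately have "(A *v (- ?y))$1 > 0"
      using assms(2) unfolding orthochronous_def by simp
    moreover have "A *v (- ?y) = - x"
      using Ay by (metis matrix_vector_mult_scaleR scaleR_minus1_left)
    ultimately show False
      using x by simp
  qed
  ultimately show "?y$1 > 0"
    by linarith
qed

lemma connected_sign_constant:
  fixes f :: "'a::topological_space \<Rightarrow> real"
  assumes "connected T" "continuous_on T f" "\<And>x. x \<in> T \<Longrightarrow> f x \<noteq> 0"
    and "a \<in> T" "f a > 0" "b \<in> T"
  shows "f b > 0"
proof (rule ccontr)
  assume "\<not> f b > 0"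
  then have "0 \<in> f ` T"
    using connectedD_interval[OF connected_continuous_image[OF assms(2,1)], of "f b" "f a" 0] assms
    by force
  with assms(3) show False
    by auto
qed

lemma O0_12_connected:
  assumes "A \<in> O0_12"
  obtains T where "connected T" "T \<subseteq> O12" "mat 1 \<in> T" "A \<in> T"
  using assms unfolding O0_12_def connected_component_def by blast

lemma O0_12_subset_O12: "O0_12 \<subseteq> O12"
  using O0_12_connected by blast

lemma O0_12_orthochronous:
  assumes "A \<in> O0_12" shows "orthochronous A"
  unfolding orthochronous_def
proof (intro allI impI)
  fix x :: "real^3"
  assume x: "mink x x \<le> 0 \<and> x$1 > 0"
  obtain T where T: "connected T" "T \<subseteq> O12" "mat 1 \<in> T" "A \<in> T"
    using O0_12_connected[OF assms] .
  have "(M *v x)$1 \<noteq> 0" if "M \<in> T" for M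
  proof -
    have M: "M \<in> O12" using that T by auto
    have "x \<noteq> 0"
      using x by auto
    then have "M *v x \<noteq> 0"
      using inj_matrix_vector_mult[OF O12_invertible[OF M]] by (metis injD matrix_vector_mult_0_right)
    moreover have "mink (M *v x) (M *v x) \<le> 0"
      using M x by (simp add: O12_def)
    ultimately show ?thesis
      using causal_time_nonzero by blast
  qed
  moreover have "continuous_on T (\<lambda>M. (M *v x)$1)"
    unfolding matrix_vector_mult_def sum_3 by (auto intro!: continuous_intros)
  ultimately show "(A *v x)$1 > 0"
    using connected_sign_constant[where f = "\<lambda>M. (M *v x)$1", OF T(1) _ _ T(3) _ T(4)] x by simp
qed

lemma O0_12_det:
  assumes "A \<in> O0_12" shows "det A = 1"
proof -
  obtain T where T: "connected T" "T \<subseteq> O12" "mat 1 \<in> T" "A \<in> T"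
    using O0_12_connected[OF assms] .
  have "continuous_on T det"
    unfolding det_3 by (auto intro!: continuous_intros)
  moreover have "det M \<noteq> 0" if "M \<in> T" for M
    using O12_det_square[of M] that T by auto
  ultimately have "det A > 0"
    using connected_sign_constant[where f = det, OF T(1) _ _ T(3) _ T(4)] by simp
  moreover have "(det A)\<^sup>2 = 1"
    using O12_det_square T by auto
  ultimately show ?thesis
    by (metis abs_of_pos power2_eq_1_iff abs_1 abs_neg_one)
qed

section \<open>The projective action on the disk\<close>

lemma orthochronous_lift_time_pos:
  assumes "orthochronous A" "cmod z \<le> 1" shows "(A *v lift z)$1 > 0"
proof -
  have "(cmod z)\<^sup>2 \<le> 1"
    using assms(2) by (simp add: power_le_one)
  with assms(1) show ?thesis
    by (simp add: orthochronous_def mink_lift_self)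
qed

lemma lift_act: "(A *v lift z)$1 \<noteq> 0 \<Longrightarrow> A *v lift z = (A *v lift z)$1 *\<^sub>R lift (act A z)"
  unfolding act_def by (rule lift_Pi_proj)

lemma mult_lift_act:
  assumes "(A *v lift z)$1 \<noteq> 0"
  shows "(B ** A) *v lift z = (A *v lift z)$1 *\<^sub>R (B *v lift (act A z))"
  by (metis lift_act[OF assms] matrix_vector_mul_assoc matrix_vector_mult_scaleR)

lemma act_mult: "(A *v lift z)$1 \<noteq> 0 \<Longrightarrow> act (B ** A) z = act B (act A z)"
  by (simp add: act_def mult_lift_act Pi_proj_scaleR)

lemma act_mat_1 [simp]: "act (mat 1) z = z"
  by (simp add: act_def)

lemma act_norm:
  assumes "A \<in> O12" "(A *v lift z)$1 \<noteq> 0"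
  shows "(cmod (act A z))\<^sup>2 - 1 = ((cmod z)\<^sup>2 - 1) / ((A *v lift z)$1)\<^sup>2"
proof -
  have "(cmod z)\<^sup>2 - 1 = mink (A *v lift z) (A *v lift z)"
    using assms(1) by (simp add: O12_def mink_lift_self)
  also have "\<dots> = ((A *v lift z)$1)\<^sup>2 * ((cmod (act A z))\<^sup>2 - 1)"
    using mink_self_Pi_proj[OF assms(2)] by (simp add: act_def)
  finally show ?thesis
    using assms(2) by (simp add: field_simps)
qed

lemma act_sphere:
  assumes "A \<in> O12" "orthochronous A" "z \<in> sphere 0 1" shows "act A z \<in> sphere 0 1"
proof -
  have "(cmod (act A z))\<^sup>2 - 1 = 0"
    using act_norm[OF assms(1)] orthochronous_lift_time_pos[OF assms(2), of z] assms(3) by simp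
  then show ?thesis
    by (simp add: abs_square_eq_1)
qed

lemma act_cball:
  assumes "A \<in> O12" "orthochronous A" "cmod z \<le> 1" shows "cmod (act A z) \<le> 1"
proof -
  have "(cmod z)\<^sup>2 - 1 \<le> 0"
    using assms(3) by (simp add: power_le_one)
  then have "(cmod (act A z))\<^sup>2 - 1 \<le> 0"
    using act_norm[OF assms(1)] orthochronous_lift_time_pos[OF assms(2,3)]
    by (simp add: divide_nonpos_pos)
  then show ?thesis
    by (simp add: abs_square_le_1)
qed

lemma act_ball:
  assumes "A \<in> O12" "orthochronous A" "z \<in> ball 0 1" shows "act A z \<in> ball 0 1"
proof -
  have "(cmod z)\<^sup>2 - 1 < 0"
    using assms(3) by (simp add: abs_square_less_1)
  then have "(cmod (act A z))\<^sup>2 - 1 < 0"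
    using act_norm[OF assms(1)] orthochronous_lift_time_pos[OF assms(2), of z] assms(3)
    by (simp add: divide_neg_pos)
  then show ?thesis
    by (simp add: abs_square_less_1)
qed

lemma act_image_ball:
  assumes "A \<in> O12" "orthochronous A" shows "act A ` ball 0 1 = ball 0 1"
proof
  show "act A ` ball 0 1 \<subseteq> ball 0 1"
    using act_ball[OF assms] by blast
  show "ball 0 1 \<subseteq> act A ` ball 0 1"
  proof
    fix \<zeta> :: complex
    assume \<zeta>: "\<zeta> \<in> ball 0 1"
    let ?B = "matrix_inv A"
    have "act A (act ?B \<zeta>) = act (A ** ?B) \<zeta>"
      using orthochronous_lift_time_pos[OF orthochronous_matrix_inv[OF assms], of \<zeta>] \<zeta>
      by (simp add: act_mult)
    also have "\<dots> = \<zeta>"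
      by (simp add: matrix_inv_mult O12_invertible assms(1))
    finally show "\<zeta> \<in> act A ` ball 0 1"
      using act_ball[OF O12_matrix_inv[OF assms(1)] orthochronous_matrix_inv[OF assms] \<zeta>]
      by (metis image_eqI)
  qed
qed

section \<open>Affine majorants on the circle\<close>

definition majorants :: "(complex \<Rightarrow> real) \<Rightarrow> (real^3) set" where
  "majorants \<phi> = {p. \<forall>z\<in>sphere 0 1. \<phi> z \<le> p \<bullet> lift z}"

definition upper_envelope :: "(complex \<Rightarrow> real) \<Rightarrow> complex \<Rightarrow> real" where
  "upper_envelope \<phi> \<eta> = Inf ((\<lambda>p. p \<bullet> lift \<eta>) ` majorants \<phi>)"

lemma affine_fun_iff_inner_lift: "affine_fun a \<longleftrightarrow> (\<exists>p::real^3. a = (\<lambda>\<eta>. p \<bullet> lift \<eta>))"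
proof
  assume "affine_fun a"
  then obtain b c where "a = (\<lambda>\<eta>. c + b \<bullet> \<eta>)"
    by (auto simp: affine_fun_def)
  then have "a = (\<lambda>\<eta>. vector [c, Re b, Im b] \<bullet> lift \<eta>)"
    by (simp add: inner_lift)
  then show "\<exists>p::real^3. a = (\<lambda>\<eta>. p \<bullet> lift \<eta>)" ..
next
  assume "\<exists>p::real^3. a = (\<lambda>\<eta>. p \<bullet> lift \<eta>)"
  then show "affine_fun a"
    unfolding affine_fun_def inner_lift by blast
qed

lemma phi_plus_eq_upper_envelope: "phi_plus Y \<eta> = upper_envelope (phiY Y) \<eta>"
  unfolding phi_plus_def upper_envelope_def majorants_def affine_fun_iff_inner_lift
  by (rule arg_cong[where f = Inf]) auto

lemma phi_minus_eq_upper_envelope: "phi_minus Y \<eta> = - upper_envelope (\<lambda>z. - phiY Y z) \<eta>"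
proof -
  have "{a \<eta> | a. affine_fun a \<and> (\<forall>z\<in>sphere 0 1. a z \<le> phiY Y z)}
      = uminus ` (\<lambda>p. p \<bullet> lift \<eta>) ` majorants (\<lambda>z. - phiY Y z)"
  proof (intro set_eqI iffI)
    fix x
    assume "x \<in> {a \<eta> | a. affine_fun a \<and> (\<forall>z\<in>sphere 0 1. a z \<le> phiY Y z)}"
    then obtain p :: "real^3" where "x = p \<bullet> lift \<eta>" "\<forall>z\<in>sphere 0 1. p \<bullet> lift z \<le> phiY Y z"
      unfolding affine_fun_iff_inner_lift by blast
    then have "x = - ((- p) \<bullet> lift \<eta>)" "- p \<in> majorants (\<lambda>z. - phiY Y z)"
      by (auto simp: majorants_def)
    then show "x \<in> uminus ` (\<lambda>p. p \<bullet> lift \<eta>) ` majorants (\<lambda>z. - phiY Y z)"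
      by blast
  next
    fix x
    assume "x \<in> uminus ` (\<lambda>p. p \<bullet> lift \<eta>) ` majorants (\<lambda>z. - phiY Y z)"
    then obtain p where "p \<in> majorants (\<lambda>z. - phiY Y z)" "x = - (p \<bullet> lift \<eta>)"
      by blast
    then have "x = (- p) \<bullet> lift \<eta>" "\<forall>z\<in>sphere 0 1. (- p) \<bullet> lift z \<le> phiY Y z"
      by (auto simp: majorants_def)
    then show "x \<in> {a \<eta> | a. affine_fun a \<and> (\<forall>z\<in>sphere 0 1. a z \<le> phiY Y z)}"
      unfolding affine_fun_iff_inner_lift by (auto intro!: exI[of _ "\<lambda>\<eta>. (- p) \<bullet> lift \<eta>"])
  qed
  then show ?thesis
    by (simp add: phi_minus_def upper_envelope_def Inf_real_def)
qed

lemma inner_lift_lower_bound_cball: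
  assumes "\<forall>z\<in>sphere 0 1. c \<le> p \<bullet> lift z" "cmod \<eta> \<le> 1"
  shows "c \<le> p \<bullet> lift \<eta>"
proof -
  have "{\<eta>. c \<le> p \<bullet> lift \<eta>} = {\<eta>. c - p$1 \<le> Complex (p$2) (p$3) \<bullet> \<eta>}"
    by (auto simp: inner_lift)
  then have "convex {\<eta>. c \<le> p \<bullet> lift \<eta>}"
    by (simp add: convex_halfspace_ge)
  moreover have "cball 0 1 = convex hull (sphere (0::complex) 1)"
    using Krein_Milman_frontier[OF convex_cball compact_cball] by simp
  ultimately have "cball 0 1 \<subseteq> {\<eta>. c \<le> p \<bullet> lift \<eta>}"
    using assms(1) by (metis hull_minimal mem_Collect_eq subsetI)
  with assms(2) show ?thesis
    by auto
qed

lemma majorants_nonempty: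
  assumes "\<forall>z\<in>sphere 0 1. \<phi> z \<le> M" shows "majorants \<phi> \<noteq> {}"
proof -
  have "vector [M, 0, 0] \<in> majorants \<phi>"
    using assms by (simp add: majorants_def inner_vec3)
  then show ?thesis
    by blast
qed

lemma bdd_below_majorant_values:
  assumes "\<forall>z\<in>sphere 0 1. c \<le> \<phi> z" "cmod \<eta> \<le> 1"
  shows "bdd_below ((\<lambda>p. p \<bullet> lift \<eta>) ` majorants \<phi>)"
proof (rule bdd_belowI2)
  fix p
  assume "p \<in> majorants \<phi>"
  then have "\<forall>z\<in>sphere 0 1. c \<le> p \<bullet> lift z"
    using assms(1) unfolding majorants_def by force
  then show "c \<le> p \<bullet> lift \<eta>"
    using inner_lift_lower_bound_cball assms(2) by blast
qed

section \<open>Weighted pullbacks\<close>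

definition weighted_pullback :: "real^3^3 \<Rightarrow> (complex \<Rightarrow> real) \<Rightarrow> complex \<Rightarrow> real" where
  "weighted_pullback B \<phi> w = (B *v lift w)$1 * \<phi> (act B w)"

lemma weighted_pullback_mult:
  assumes "(A *v lift w)$1 \<noteq> 0"
  shows "weighted_pullback A (weighted_pullback B \<phi>) w = weighted_pullback (B ** A) \<phi> w"
  using mult_lift_act[OF assms, of B] act_mult[OF assms, of B]
  by (simp add: weighted_pullback_def)

lemma weighted_pullback_mat_1 [simp]: "weighted_pullback (mat 1) \<phi> = \<phi>"
  by (simp add: weighted_pullback_def fun_eq_iff)

lemma weighted_pullback_inner_lift:
  assumes "(B *v lift w)$1 \<noteq> 0"
  shows "weighted_pullback B (\<lambda>z. p \<bullet> lift z) w = (p v* B) \<bullet> lift w"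
proof -
  have "p \<bullet> (B *v lift w) = (B *v lift w)$1 * (p \<bullet> lift (act B w))"
    by (subst lift_act[OF assms]) simp
  then show ?thesis
    by (simp add: weighted_pullback_def dot_lmul_matrix)
qed

lemma weighted_pullback_mono:
  assumes "B \<in> O12" "orthochronous B" "\<forall>z\<in>sphere 0 1. \<phi> z \<le> \<psi> z" "w \<in> sphere 0 1"
  shows "weighted_pullback B \<phi> w \<le> weighted_pullback B \<psi> w"
  using assms act_sphere orthochronous_lift_time_pos[OF assms(2), of w]
  by (simp add: weighted_pullback_def)

lemma weighted_pullback_inverse:
  assumes B: "B \<in> O12" "orthochronous B"
    and \<psi>: "\<forall>w\<in>sphere 0 1. \<psi> w = weighted_pullback B \<phi> w + q \<bullet> lift w"
    and z: "z \<in> sphere 0 1"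
  shows "\<phi> z = weighted_pullback (matrix_inv B) \<psi> z + (- (q v* matrix_inv B)) \<bullet> lift z"
proof -
  let ?A = "matrix_inv B"
  have A: "?A \<in> O12" "orthochronous ?A"
    using O12_matrix_inv[OF B(1)] orthochronous_matrix_inv[OF B] by auto
  have pos: "(?A *v lift z)$1 \<noteq> 0"
    using orthochronous_lift_time_pos[OF A(2), of z] z by simp
  have "\<phi> z = weighted_pullback ?A (weighted_pullback B \<phi>) z"
    by (simp add: weighted_pullback_mult[OF pos] matrix_inv_mult O12_invertible B(1))
  also have "\<dots> = weighted_pullback ?A \<psi> z - weighted_pullback ?A (\<lambda>w. q \<bullet> lift w) z"
    using \<psi> act_sphere[OF A z] by (simp add: weighted_pullback_def algebra_simps)
  finally show ?thesis
    by (simp add: weighted_pullback_inner_lift[OF pos])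
qed

lemma weighted_pullback_majorant:
  assumes B: "B \<in> O12" "orthochronous B"
    and \<psi>: "\<forall>w\<in>sphere 0 1. \<psi> w = weighted_pullback B \<phi> w + q \<bullet> lift w"
    and p: "p \<in> majorants \<phi>"
  shows "p v* B + q \<in> majorants \<psi>"
proof -
  have "\<psi> w \<le> (p v* B + q) \<bullet> lift w" if w: "w \<in> sphere 0 1" for w
  proof -
    have pos: "(B *v lift w)$1 \<noteq> 0"
      using orthochronous_lift_time_pos[OF B(2), of w] w by simp
    have "weighted_pullback B \<phi> w \<le> weighted_pullback B (\<lambda>z. p \<bullet> lift z) w"
      using weighted_pullback_mono[OF B _ w] p by (simp add: majorants_def)
    then show ?thesis
      using \<psi> w by (simp add: weighted_pullback_inner_lift[OF pos] inner_add_left)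
  qed
  then show ?thesis
    by (simp add: majorants_def)
qed

lemma majorants_weighted_pullback:
  assumes B: "B \<in> O12" "orthochronous B"
    and \<psi>: "\<forall>w\<in>sphere 0 1. \<psi> w = weighted_pullback B \<phi> w + q \<bullet> lift w"
  shows "majorants \<psi> = (\<lambda>p. p v* B + q) ` majorants \<phi>"
proof
  show "(\<lambda>p. p v* B + q) ` majorants \<phi> \<subseteq> majorants \<psi>"
    using weighted_pullback_majorant[OF B \<psi>] by blast
  show "majorants \<psi> \<subseteq> (\<lambda>p. p v* B + q) ` majorants \<phi>"
  proof
    fix p
    assume "p \<in> majorants \<psi>"
    let ?A = "matrix_inv B"
    have "p v* ?A + - (q v* ?A) \<in> majorants \<phi>"
      by (rule weighted_pullback_majorant[where \<phi> = \<psi>, OF O12_matrix_inv[OF B(1)]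
            orthochronous_matrix_inv[OF B] _ \<open>p \<in> majorants \<psi>\<close>])
        (use weighted_pullback_inverse[OF B \<psi>] in blast)
    moreover have "p = (p v* ?A + - (q v* ?A)) v* B + q"
      by (simp add: vector_matrix_mult_diff_distrib vector_matrix_mul_assoc matrix_inv_mult
          O12_invertible B(1))
    ultimately show "p \<in> (\<lambda>p. p v* B + q) ` majorants \<phi>"
      by blast
  qed
qed

lemma upper_envelope_weighted_pullback:
  assumes B: "B \<in> O12" "orthochronous B" and bounded: "bounded (\<phi> ` sphere 0 1)"
    and \<psi>: "\<forall>w\<in>sphere 0 1. \<psi> w = weighted_pullback B \<phi> w + q \<bullet> lift w"
    and \<eta>: "cmod \<eta> \<le> 1"
  shows "upper_envelope \<psi> \<eta> = (B *v lift \<eta>)$1 * upper_envelope \<phi> (act B \<eta>) + q \<bullet> lift \<eta>"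
proof -
  define m where "m = (B *v lift \<eta>)$1"
  define S where "S = (\<lambda>p. p \<bullet> lift (act B \<eta>)) ` majorants \<phi>"
  have m: "m > 0"
    unfolding m_def using orthochronous_lift_time_pos[OF B(2) \<eta>] .
  obtain M where M: "\<forall>z\<in>sphere 0 1. \<bar>\<phi> z\<bar> \<le> M"
    using bounded by (auto simp: bounded_real)
  have S: "S \<noteq> {}" "bdd_below S"
    unfolding S_def using M act_cball[OF B \<eta>]
    by (auto intro!: majorants_nonempty[where M = M] bdd_below_majorant_values[where c = "- M"])
  have "B *v lift \<eta> = m *\<^sub>R lift (act B \<eta>)"
    using lift_act[of B \<eta>] m unfolding m_def by simp
  then have "(p v* B + q) \<bullet> lift \<eta> = m * (p \<bullet> lift (act B \<eta>)) + q \<bullet> lift \<eta>" for p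
    by (simp add: inner_add_left dot_lmul_matrix)
  then have "upper_envelope \<psi> \<eta> = Inf ((\<lambda>s. m * s + q \<bullet> lift \<eta>) ` S)"
    unfolding upper_envelope_def majorants_weighted_pullback[OF B \<psi>] S_def image_image by simp
  also have "\<dots> = m * Inf S + q \<bullet> lift \<eta>"
    using m S by (intro continuous_at_Inf_mono[symmetric]) (auto intro!: monoI continuous_intros)
  finally show ?thesis
    unfolding upper_envelope_def S_def m_def .
qed

definition width_ratio :: "(complex \<Rightarrow> complex) \<Rightarrow> complex \<Rightarrow> real" where
  "width_ratio Y \<eta> = (phi_plus Y \<eta> - phi_minus Y \<eta>) / sqrt (1 - (cmod \<eta>)\<^sup>2)"

lemma width_ratio_weighted_pullback:
  assumes B: "B \<in> O12" "orthochronous B" and bounded: "bounded (phiY X ` sphere 0 1)"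
    and Y: "\<forall>w\<in>sphere 0 1. phiY Y w = weighted_pullback B (phiY X) w + q \<bullet> lift w"
    and \<eta>: "\<eta> \<in> ball 0 1"
  shows "width_ratio Y \<eta> = width_ratio X (act B \<eta>)"
proof -
  define m where "m = (B *v lift \<eta>)$1"
  define \<zeta> where "\<zeta> = act B \<eta>"
  have m: "m > 0"
    using orthochronous_lift_time_pos[OF B(2), of \<eta>] \<eta> unfolding m_def by simp
  have plus: "phi_plus Y \<eta> = m * phi_plus X \<zeta> + q \<bullet> lift \<eta>"
    using upper_envelope_weighted_pullback[OF B bounded Y, of \<eta>] \<eta>
    unfolding phi_plus_eq_upper_envelope m_def \<zeta>_def by simp
  have "bounded ((\<lambda>z. - phiY X z) ` sphere 0 1)"
    using bounded bounded_uminus[of "phiY X ` sphere 0 1"] by (simp add: image_image)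
  moreover have "\<forall>w\<in>sphere 0 1. - phiY Y w = weighted_pullback B (\<lambda>z. - phiY X z) w + (- q) \<bullet> lift w"
    using Y by (simp add: weighted_pullback_def)
  ultimately have minus: "phi_minus Y \<eta> = m * phi_minus X \<zeta> + q \<bullet> lift \<eta>"
    using upper_envelope_weighted_pullback[OF B, of "\<lambda>z. - phiY X z" _ "- q" \<eta>] \<eta>
    unfolding phi_minus_eq_upper_envelope m_def \<zeta>_def by simp
  have "1 - (cmod \<eta>)\<^sup>2 = m\<^sup>2 * (1 - (cmod \<zeta>)\<^sup>2)"
    using act_norm[OF B(1), of \<eta>] m unfolding m_def \<zeta>_def by (simp add: field_simps)
  then have "sqrt (1 - (cmod \<eta>)\<^sup>2) = m * sqrt (1 - (cmod \<zeta>)\<^sup>2)"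
    using m by (simp add: real_sqrt_mult)
  then have "width_ratio Y \<eta> = (m * (phi_plus X \<zeta> - phi_minus X \<zeta>)) / (m * sqrt (1 - (cmod \<zeta>)\<^sup>2))"
    by (simp add: width_ratio_def plus minus algebra_simps)
  also have "\<dots> = width_ratio X \<zeta>"
    unfolding width_ratio_def by (rule mult_divide_mult_cancel_left) (use m in simp)
  finally show ?thesis
    unfolding \<zeta>_def .
qed

lemma width_weighted_pullback:
  assumes B: "B \<in> O12" "orthochronous B" and bounded: "bounded (phiY X ` sphere 0 1)"
    and Y: "\<forall>w\<in>sphere 0 1. phiY Y w = weighted_pullback B (phiY X) w + q \<bullet> lift w"
  shows "width Y = width X"
proof -
  have "width Y = (SUP \<eta>\<in>ball 0 1. ereal (width_ratio Y \<eta>))"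
    by (simp add: width_def width_ratio_def)
  also have "\<dots> = (SUP \<eta>\<in>ball 0 1. ereal (width_ratio X (act B \<eta>)))"
    using width_ratio_weighted_pullback[OF B bounded Y] by (intro SUP_cong) auto
  also have "\<dots> = (SUP \<zeta>\<in>act B ` ball 0 1. ereal (width_ratio X \<zeta>))"
    by (simp add: image_comp)
  also have "\<dots> = width X"
    by (simp add: act_image_ball[OF B] width_def width_ratio_def)
  finally show ?thesis .
qed

section \<open>Angular functions of Killing fields and pushforwards\<close>

definition Pi_proj_deriv :: "real^3 \<Rightarrow> real^3 \<Rightarrow> complex" where
  "Pi_proj_deriv y d =
     Complex ((d$2 * y$1 - y$2 * d$1) / (y$1)\<^sup>2) ((d$3 * y$1 - y$3 * d$1) / (y$1)\<^sup>2)"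

definition lift_deriv :: "complex \<Rightarrow> real^3" where
  "lift_deriv h = vector [0, Re h, Im h]"

lemma lift_deriv_component [simp]:
  "lift_deriv h $ 1 = 0" "lift_deriv h $ 2 = Re h" "lift_deriv h $ 3 = Im h"
  by (simp_all add: lift_deriv_def)

lemma has_derivative_Pi_proj:
  assumes "y$1 \<noteq> 0" shows "(Pi_proj has_derivative Pi_proj_deriv y) (at y)"
proof -
  note vec_nth = bounded_linear.has_derivative[OF bounded_linear_vec_nth has_derivative_ident]
  have "((\<lambda>x. (of_real (x$2) + \<i> * of_real (x$3)) / of_real (x$1)) has_derivative
      (\<lambda>d. ((of_real (d$2) + \<i> * of_real (d$3)) * of_real (y$1)
        - (of_real (y$2) + \<i> * of_real (y$3)) * of_real (d$1)) / (of_real (y$1) * of_real (y$1)))) (at y)"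
    by (intro has_derivative_divide' has_derivative_add has_derivative_mult_right
        has_derivative_of_real vec_nth) (simp add: assms)
  moreover have "(\<lambda>x. (of_real (x$2) + \<i> * of_real (x$3)) / of_real (x$1)) = Pi_proj"
    by (simp add: fun_eq_iff Pi_proj_def complex_eq_iff Re_divide Im_divide power2_eq_square)
  moreover have "(\<lambda>d. ((of_real (d$2) + \<i> * of_real (d$3)) * of_real (y$1)
      - (of_real (y$2) + \<i> * of_real (y$3)) * of_real (d$1)) / (of_real (y$1) * of_real (y$1)))
    = Pi_proj_deriv y"
    by (simp add: fun_eq_iff Pi_proj_deriv_def complex_eq_iff Re_divide Im_divide power2_eq_square)
  ultimately show ?thesis
    by simp
qed

lemma bounded_linear_lift_deriv: "bounded_linear lift_deriv"
proof -
  have "linear lift_deriv"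
    by (rule linearI) (simp_all add: vec3_eq_iff)
  then show ?thesis
    by (simp add: linear_conv_bounded_linear)
qed

lemma has_derivative_lift: "(lift has_derivative lift_deriv) (at z)"
proof -
  have "((\<lambda>h. lift 0 + lift_deriv h) has_derivative (\<lambda>h. 0 + lift_deriv h)) (at z)"
    by (intro has_derivative_add has_derivative_const has_derivative_ident
        bounded_linear.has_derivative[OF bounded_linear_lift_deriv])
  moreover have "(\<lambda>h. lift 0 + lift_deriv h) = lift"
    by (simp add: fun_eq_iff vec3_eq_iff)
  ultimately show ?thesis
    by simp
qed

lemma has_derivative_act:
  assumes "(A *v lift z)$1 \<noteq> 0"
  shows "(act A has_derivative (\<lambda>h. Pi_proj_deriv (A *v lift z) (A *v lift_deriv h))) (at z)"
  using diff_chain_at[OF bounded_linear.has_derivative[OF matrix_vector_mul_bounded_linear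
        has_derivative_lift] has_derivative_Pi_proj[OF assms]]
  by (simp add: act_def[abs_def] o_def)

lemma angular_Pi_proj_deriv:
  assumes "y$1 \<noteq> 0" "mink y y = 0"
  shows "Re (Pi_proj_deriv y d / (\<i> * Pi_proj y)) = (y$2 * d$3 - y$3 * d$2) / (y$1)\<^sup>2"
proof -
  have "(y$2)\<^sup>2 + (y$3)\<^sup>2 = (y$1)\<^sup>2"
    using assms(2) by (simp add: mink_def power2_eq_square)
  then have "(- y$3 / y$1)\<^sup>2 + (y$2 / y$1)\<^sup>2 = 1"
    using assms(1) by (simp add: field_simps power2_eq_square)
  moreover have "\<i> * Pi_proj y = Complex (- y$3 / y$1) (y$2 / y$1)"
    by (simp add: Pi_proj_def complex_eq_iff)
  ultimately have "Re (Pi_proj_deriv y d / (\<i> * Pi_proj y))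
      = ((d$2 * y$1 - y$2 * d$1) / (y$1)\<^sup>2) * (- y$3 / y$1) + ((d$3 * y$1 - y$3 * d$1) / (y$1)\<^sup>2) * (y$2 / y$1)"
    by (simp add: Re_divide Pi_proj_deriv_def)
  also have "\<dots> = (y$2 * d$3 - y$3 * d$2) / (y$1)\<^sup>2"
    using assms(1) by (simp add: field_simps power2_eq_square)
  finally show ?thesis .
qed

lemma mcross_components:
  "mcross x y = vector [x$3 * y$2 - x$2 * y$3, x$3 * y$1 - x$1 * y$3, x$1 * y$2 - x$2 * y$1]"
  unfolding mcross_def
proof (rule the_equality)
  fix w
  assume "\<forall>u. mink w u = det (vector [x, y, u] :: real^3^3)"
  then have "mink w (vector [1, 0, 0]) = det (vector [x, y, vector [1, 0, 0]] :: real^3^3)"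
      "mink w (vector [0, 1, 0]) = det (vector [x, y, vector [0, 1, 0]] :: real^3^3)"
      "mink w (vector [0, 0, 1]) = det (vector [x, y, vector [0, 0, 1]] :: real^3^3)"
    by blast+
  then show "w = vector [x$3 * y$2 - x$2 * y$3, x$3 * y$1 - x$1 * y$3, x$1 * y$2 - x$2 * y$1]"
    by (simp add: mink_def det_3 vec3_eq_iff algebra_simps)
qed (simp add: mink_def det_3 algebra_simps)

lemma phiY_Killing:
  assumes "w \<in> sphere 0 1"
  shows "phiY (Killing v) w = vector [- v$1, v$2, v$3] \<bullet> lift w"
proof -
  have circle: "(Re w)\<^sup>2 + (Im w)\<^sup>2 = 1"
    using assms by (simp add: cmod_power2[symmetric])
  have "frechet_derivative Pi_proj (at (lift w)) = Pi_proj_deriv (lift w)"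
    using frechet_derivative_at[OF has_derivative_Pi_proj[of "lift w"]] by simp
  then have "phiY (Killing v) w = Re (Pi_proj_deriv (lift w) (mcross (lift w) v) / (\<i> * Pi_proj (lift w)))"
    by (simp add: phiY_def Killing_def)
  also have "\<dots> = Re w * mcross (lift w) v $ 3 - Im w * mcross (lift w) v $ 2"
    using angular_Pi_proj_deriv[of "lift w"] assms by (simp add: mink_lift_self)
  also have "\<dots> = - v$1 * ((Re w)\<^sup>2 + (Im w)\<^sup>2) + Re w * v$2 + Im w * v$3"
    by (simp add: mcross_components power2_eq_square algebra_simps)
  finally show ?thesis
    by (simp add: circle inner_vec3)
qed

text \<open>With \<open>A *v u = e\<^sub>0\<close>, the left-hand side is the determinant with rows
  \<open>A *v lift z\<close>, \<open>A *v lift_deriv (\<i> * z)\<close>, \<open>A *v u\<close>; and on the circle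
  \<open>det [lift z; lift_deriv (\<i> * z); u] = - mink (lift z) u = - mink (A *v lift z) e\<^sub>0\<close>.\<close>

lemma O12_lift_tangent_det:
  assumes A: "A \<in> O12" and z: "cmod z = 1"
  shows "(A *v lift z)$2 * (A *v lift_deriv (\<i> * z))$3 - (A *v lift z)$3 * (A *v lift_deriv (\<i> * z))$2
    = det A * (A *v lift z)$1"
proof -
  define e :: "real^3" where "e = vector [1, 0, 0]"
  define u where "u = matrix_inv A *v e"
  define y where "y = A *v lift z"
  define t where "t = A *v lift_deriv (\<i> * z)"
  define M :: "real^3^3" where "M = vector [lift z, lift_deriv (\<i> * z), u]"
  have Au: "A *v u = e"
    unfolding u_def by (simp add: matrix_vector_mul_assoc matrix_inv_mult O12_invertible A)
  have rows: "(M ** transpose A) $ i = A *v (M $ i)" for i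
    by (simp add: vec_eq_iff matrix_matrix_mult_def transpose_def matrix_vector_mult_def mult.commute)
  have "det M = u$1 * ((Re z)\<^sup>2 + (Im z)\<^sup>2) - Re z * u$2 - Im z * u$3"
    by (simp add: det_3 M_def power2_eq_square algebra_simps)
  also have "\<dots> = - mink (lift z) u"
    using z by (simp add: mink_def cmod_power2[symmetric])
  also have "\<dots> = - mink y e"
    using A by (simp add: O12_def y_def Au[symmetric])
  also have "\<dots> = y$1"
    by (simp add: mink_def e_def)
  finally have "det M = y$1" .
  have "M ** transpose A = vector [y, t, e]"
    unfolding vec_eq_iff[of "M ** transpose A"] rows forall_3 by (simp add: M_def Au y_def t_def)
  then have "det (vector [y, t, e] :: real^3^3) = det M * det A"
    by (metis det_mul det_transpose)
  moreover have "det (vector [y, t, e] :: real^3^3) = y$2 * t$3 - y$3 * t$2"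
    by (simp add: det_3 e_def)
  ultimately show ?thesis
    using \<open>det M = y$1\<close> by (simp add: y_def t_def mult.commute)
qed

lemma angular_deriv_act_rotation:
  assumes A: "A \<in> O12" "orthochronous A" "det A = 1" and z: "z \<in> sphere 0 1"
  shows "Re (frechet_derivative (act A) (at z) (\<i> * z) / (\<i> * act A z)) = 1 / (A *v lift z)$1"
proof -
  define y where "y = A *v lift z"
  define t where "t = A *v lift_deriv (\<i> * z)"
  have y1: "y$1 > 0"
    using orthochronous_lift_time_pos[OF A(2), of z] z unfolding y_def by simp
  have null: "mink y y = 0"
    using A(1) z by (simp add: y_def O12_def mink_lift_self)
  have "frechet_derivative (act A) (at z) = (\<lambda>h. Pi_proj_deriv y (A *v lift_deriv h))"
    using frechet_derivative_at[OF has_derivative_act[of A z, folded y_def]] y1 by simp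
  then have "frechet_derivative (act A) (at z) (\<i> * z) = Pi_proj_deriv y t"
    by (simp add: t_def)
  then have "Re (frechet_derivative (act A) (at z) (\<i> * z) / (\<i> * act A z))
      = (y$2 * t$3 - y$3 * t$2) / (y$1)\<^sup>2"
    using angular_Pi_proj_deriv[of y t] y1 null by (simp add: act_def y_def[symmetric])
  also have "\<dots> = y$1 / (y$1)\<^sup>2"
    using O12_lift_tangent_det[OF A(1), of z, folded y_def t_def] z A(3) by simp
  also have "\<dots> = 1 / y$1"
    using y1 by (simp add: power2_eq_square)
  finally show ?thesis
    unfolding y_def .
qed

lemma vfield_on_circle_eq:
  assumes "vfield_on_circle X" "z \<in> sphere 0 1"
  shows "X z = phiY X z *\<^sub>R (\<i> * z)"
proof -
  have "X z / (\<i> * z) \<in> \<real>"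
    using assms by (simp add: vfield_on_circle_def)
  then have "of_real (phiY X z) = X z / (\<i> * z)"
    unfolding phiY_def by (simp add: of_real_Re)
  moreover have "z \<noteq> 0"
    using assms(2) by auto
  ultimately show ?thesis
    by (simp add: scaleR_conv_of_real field_simps)
qed

lemma phiY_pushfwd:
  assumes A: "A \<in> O12" "orthochronous A" "det A = 1"
    and X: "vfield_on_circle X" and w: "w \<in> sphere 0 1"
  shows "phiY (pushfwd A X) w = weighted_pullback (matrix_inv A) (phiY X) w"
proof -
  let ?B = "matrix_inv A"
  define z where "z = act ?B w"
  define b where "b = (?B *v lift w)$1"
  define D where "D = frechet_derivative (act A) (at z)"
  have b: "b > 0"
    using orthochronous_lift_time_pos[OF orthochronous_matrix_inv[OF A(1,2)], of w] w
    unfolding b_def by simp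
  have z: "z \<in> sphere 0 1"
    unfolding z_def using act_sphere[OF O12_matrix_inv[OF A(1)] orthochronous_matrix_inv[OF A(1,2)] w] .
  have AB: "A ** ?B = mat 1"
    by (simp add: matrix_inv_mult O12_invertible A(1))
  then have "lift w = b *\<^sub>R (A *v lift z)"
    using mult_lift_act[of ?B w A] b unfolding b_def z_def by simp
  then have "(lift w)$1 = b * (A *v lift z)$1"
    by simp
  then have weight: "(A *v lift z)$1 = 1 / b"
    using b by (simp add: field_simps)
  have "act A z = w"
    using act_mult[of ?B w A] b AB unfolding b_def z_def by simp
  have "linear D"
    unfolding D_def using has_derivative_act[of A z] weight b
    by (intro linear_frechet_derivative differentiableI) simp
  then have "pushfwd A X w = phiY X z *\<^sub>R D (\<i> * z)"
    by (simp add: pushfwd_def z_def[symmetric] D_def[symmetric] vfield_on_circle_eq[OF X z]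
        linear_scale)
  then have "phiY (pushfwd A X) w = phiY X z * Re (D (\<i> * z) / (\<i> * act A z))"
    using \<open>act A z = w\<close> by (simp add: phiY_def scaleR_conv_of_real flip: times_divide_eq_right)
  also have "\<dots> = phiY X z * b"
    using angular_deriv_act_rotation[OF A z] weight unfolding D_def by simp
  finally show ?thesis
    by (simp add: weighted_pullback_def b_def z_def)
qed

theorem lemma2p15:
  fixes X :: "complex \<Rightarrow> complex" and A :: "real^3^3" and v :: "real^3"
  assumes "continuous_on (sphere 0 1) X"
    and "vfield_on_circle X"
    and "A \<in> O0_12"
  shows "width (\<lambda>z. pushfwd A X z + Killing v z) = width X"
proof -
  have A: "A \<in> O12" "orthochronous A" "det A = 1"
    using O0_12_subset_O12 O0_12_orthochronous O0_12_det assms(3) by auto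
  have "continuous_on (sphere 0 1) (phiY X)"
    unfolding phiY_def[abs_def] by (intro continuous_intros assms(1)) auto
  then have "bounded (phiY X ` sphere 0 1)"
    by (intro compact_imp_bounded compact_continuous_image) auto
  moreover have "\<forall>w\<in>sphere 0 1. phiY (\<lambda>z. pushfwd A X z + Killing v z) w
      = weighted_pullback (matrix_inv A) (phiY X) w + vector [- v$1, v$2, v$3] \<bullet> lift w"
    using phiY_pushfwd[OF A assms(2)] phiY_Killing by (simp add: phiY_def add_divide_distrib)
  ultimately show ?thesis
    by (rule width_weighted_pullback[OF O12_matrix_inv[OF A(1)] orthochronous_matrix_inv[OF A(1,2)]])
qed

end
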